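(* Assume $d,s,c,v,p,\Delta\geq0$, $u^{\mathrm{REC}}>0$, $u^{\mathrm{CP}}>0$, $\gamma\in[0,1)$, and every facility cost function $f^{\mathrm{REC}}_{z,j},f^{\mathrm{CP}}_{z,k}:[0,\infty)\to\mathbb{R}$ is concave and monotonically increasing with value $0$ at $0$. Then problems (P) and (PMI) described in the context have the same optimal objective value.
   Context: Index sets (finite): chemistries $\mathcal{I}$; recycling processes $\mathcal{J}$; materials $\mathcal{K}\supseteq\mathcal{K}^{\mathrm{CP}}$ (cathode powders); zones $\mathcal{Z}$; periods $\mathcal{T}=\{1,\dots,T\}$; planning periods $\mathcal{L}=\{1,\dots,L\}$ with $\{\mathcal{T}_l\}$ a partition of $\mathcal{T}$ and $l_t$ the planning period containing $t$; $\sigma_t$ the stage of $t\in\mathcal{T}\cup\{0\}$; finite nonempty node sets $\Omega_\sigma$ with probabilities $p_\omega$; ancestor maps $a_\omega(t)\in\Omega_{\sigma_t}$ with $a_\omega(t)=\omega$ if $\omega\in\Omega_{\sigma_t}$; positive integers $N^{\mathrm{REC}}_l,N^{\mathrm{CP}}_{l,k}$, $\mathcal{N}^{\mathrm{REC}}_l=\{1,\dots,N^{\mathrm{REC}}_l\}$, $\mathcal{N}^{\mathrm{CP}}_{l,k}=\{1,\dots,N^{\mathrm{CP}}_{l,k}\}$. Data: $\Delta^{\mathrm{NB}},\Delta^{\mathrm{CP}},\Delta^{\mathrm{MC}},\Delta^{\mathrm{REC}}$, $d_{\omega,z,t,i}$, $s_{\omega,z,t,i}$, $u^{\mathrm{REC}},u^{\mathrm{CP}}$,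 costs $c^{\mathrm{NB,NM}}_{\omega,t,k},c^{\mathrm{CP,NM}}_{\omega,t,k},c^{\mathrm{MC}}_{\omega,z,t,k},c^{\mathrm{CP}}_{\omega,z,t,k},c^{\mathrm{REC}}_{\omega,z,t,i,j},c^{\mathrm{TR,RM}}_{z,z'},c^{\mathrm{TR,RB}}_{z,z'}$, values $v_{\omega,t,k}$, proportions $\eta\in[0,1]$, $\rho\geq0$, discount $\gamma$, facility cost functions $f^{\mathrm{REC}}_{z,j},f^{\mathrm{CP}}_{z,k}$. Operational variables $x\geq0$ (for $t\in\mathcal{T},z,\omega\in\Omega_{\sigma_t}$, inventories also at $t=0$): $x^{\mathrm{NM,NB}}_{\omega,z,t,k},x^{\mathrm{RM,INV}}_{\omega,z,t,k},x^{\mathrm{RM,S}}_{\omega,z,t,k},x^{\mathrm{INV}}_{\omega,z,t,k}$ ($k\in\mathcal{K}$); $x^{\mathrm{INV,NB}},x^{\mathrm{CP,INV}}$ ($k\in\mathcal{K}^{\mathrm{CP}}$); $x^{\mathrm{NM,CP}},x^{\mathrm{MC,CP}},x^{\mathrm{INV,MC}}$ ($k\notin\mathcal{K}^{\mathrm{CP}}$); $x^{\mathrm{RB}}_{\omega,z,t,i}$; $x^{\mathrm{RB,RM}}_{\omega,z,t,i,j}$; $x^{\mathrm{TR,RM}}_{\omega,z,z',t,k},x^{\mathrm{TR,RB}}_{\omega,z,z',t,i}$ ($z'\neq z$). Operational constraints (X): for all $t\in\mathcal{T},z,\omega\in\Omega_{\sigma_t}$: $\sum_i\Delta^{\mathrm{NB}}_{i,k}d_{\omega,z,t,i}=x^{\mathrm{NM,NB}}_{\omega,z,t,k}+x^{\mathrm{INV,NB}}_{\omega,z,t,k}$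 ($k\in\mathcal{K}^{\mathrm{CP}}$); $\sum_i\Delta^{\mathrm{NB}}_{i,k}d_{\omega,z,t,i}=x^{\mathrm{NM,NB}}_{\omega,z,t,k}$ ($k\notin\mathcal{K}^{\mathrm{CP}}$); $\sum_{k'\in\mathcal{K}^{\mathrm{CP}}}\Delta^{\mathrm{CP}}_{k',k}x^{\mathrm{CP,INV}}_{\omega,z,t,k'}=x^{\mathrm{NM,CP}}_{\omega,z,t,k}+x^{\mathrm{MC,CP}}_{\omega,z,t,k}$ ($k\notin\mathcal{K}^{\mathrm{CP}}$); $\sum_{k'\notin\mathcal{K}^{\mathrm{CP}}}\Delta^{\mathrm{MC}}_{k',k}x^{\mathrm{MC,CP}}_{\omega,z,t,k'}=x^{\mathrm{INV,MC}}_{\omega,z,t,k}$ ($k\notin\mathcal{K}^{\mathrm{CP}}$); $x^{\mathrm{RM,INV}}_{\omega,z,t,k}+x^{\mathrm{RM,S}}_{\omega,z,t,k}=\sum_{i,j}\Delta^{\mathrm{REC}}_{k,i,j}x^{\mathrm{RB,RM}}_{\omega,z,t,i,j}$; $x^{\mathrm{RB}}_{\omega,z,0,i}=0$, $x^{\mathrm{INV}}_{\omega,z,0,k}=0$ for $\omega\in\Omega_{\sigma_0}$; with $\omega'=a_\omega(t-1)$: $x^{\mathrm{RB}}_{\omega,z,t,i}=x^{\mathrm{RB}}_{\omega',z,t-1,i}+\sum_{z'\neq z}(x^{\mathrm{TR,RB}}_{\omega,z',z,t,i}-x^{\mathrm{TR,RB}}_{\omega,z,z',t,i})+s_{\omega,z,t,i}-\sum_jx^{\mathrm{RB,RM}}_{\omega,z,t,i,j}$;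 $x^{\mathrm{INV}}_{\omega,z,t,k}=x^{\mathrm{INV}}_{\omega',z,t-1,k}+\sum_{z'\neq z}(x^{\mathrm{TR,RM}}_{\omega,z',z,t,k}-x^{\mathrm{TR,RM}}_{\omega,z,z',t,k})+x^{\mathrm{RM,INV}}_{\omega,z,t,k}-x^{\mathrm{INV,MC}}_{\omega,z,t,k}$ for $k\notin\mathcal{K}^{\mathrm{CP}}$, and for $k\in\mathcal{K}^{\mathrm{CP}}$ the same with $-x^{\mathrm{INV,MC}}_{\omega,z,t,k}$ replaced by $+x^{\mathrm{CP,INV}}_{\omega,z,t,k}-x^{\mathrm{INV,NB}}_{\omega,z,t,k}$. Operational cost: $C^{\mathrm{OP}}_{\omega,t}(x)=\sum_{z}\Big(\sum_{k\in\mathcal{K}}c^{\mathrm{NB,NM}}_{\omega,t,k}x^{\mathrm{NM,NB}}_{\omega,z,t,k}+\sum_{k\notin\mathcal{K}^{\mathrm{CP}}}(c^{\mathrm{CP,NM}}_{\omega,t,k}x^{\mathrm{NM,CP}}_{\omega,z,t,k}+c^{\mathrm{MC}}_{\omega,z,t,k}x^{\mathrm{MC,CP}}_{\omega,z,t,k})+\sum_{k}v_{\omega,t,k}(\rho x^{\mathrm{INV}}_{\omega,z,t,k}-\eta x^{\mathrm{RM,S}}_{\omega,z,t,k})+\sum_{k\in\mathcal{K}^{\mathrm{CP}}}c^{\mathrm{CP}}_{\omega,z,t,k}x^{\mathrm{CP,INV}}_{\omega,z,t,k}+\sum_{i,j}c^{\mathrm{REC}}_{\omega,z,t,i,j}x^{\mathrm{RB,RM}}_{\omega,z,t,i,j}+\sum_{z'\neq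 z}(\sum_kc^{\mathrm{TR,RM}}_{z,z'}x^{\mathrm{TR,RM}}_{\omega,z,z',t,k}+\sum_ic^{\mathrm{TR,RB}}_{z,z'}x^{\mathrm{TR,RB}}_{\omega,z,z',t,i})\Big)$. Problem (P): variables $x$ and $y^{\mathrm{REC}}_{z,l,j,n}\geq0$ ($n\in\mathcal{N}^{\mathrm{REC}}_l$), $y^{\mathrm{CP}}_{z,l,k,n}\geq0$ ($k\in\mathcal{K}^{\mathrm{CP}},n\in\mathcal{N}^{\mathrm{CP}}_{l,k}$); constraints (X) together with $\sum_ny^{\mathrm{REC}}_{z,l,j,n}\geq\sum_ix^{\mathrm{RB,RM}}_{\omega,z,t,i,j}$ and $\sum_ny^{\mathrm{CP}}_{z,l,k,n}\geq x^{\mathrm{CP,INV}}_{\omega,z,t,k}$ for all $t\in\mathcal{T}_l,\omega\in\Omega_{\sigma_t}$; $\sum_{n\in\mathcal{N}^{\mathrm{REC}}_l}y^{\mathrm{REC}}_{z,l,j,n}\geq\sum_{n\in\mathcal{N}^{\mathrm{REC}}_{l-1}}y^{\mathrm{REC}}_{z,l-1,j,n}$, $\sum_{n\in\mathcal{N}^{\mathrm{CP}}_{l,k}}y^{\mathrm{CP}}_{z,l,k,n}\geq\sum_{n\in\mathcal{N}^{\mathrm{CP}}_{l-1,k}}y^{\mathrm{CP}}_{z,l-1,k,n}$ ($l\geq2$); $y^{\mathrm{REC}}_{z,l,j,n}\leq u^{\mathrm{REC}}$, $y^{\mathrm{CP}}_{z,l,k,n}\leq u^{\mathrm{CP}}$.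 Objective: minimize $\sum_t(1-\gamma)^{t-1}\big(C^{\mathrm{PL}}_t(y)+\sum_{\omega\in\Omega_{\sigma_t}}p_\omega C^{\mathrm{OP}}_{\omega,t}(x)\big)$ with $C^{\mathrm{PL}}_t(y)=\sum_z\big(\sum_j\sum_{n\in\mathcal{N}^{\mathrm{REC}}_{l_t}}f^{\mathrm{REC}}_{z,j}(y^{\mathrm{REC}}_{z,l_t,j,n})+\sum_{k\in\mathcal{K}^{\mathrm{CP}}}\sum_{n\in\mathcal{N}^{\mathrm{CP}}_{l_t,k}}f^{\mathrm{CP}}_{z,k}(y^{\mathrm{CP}}_{z,l_t,k,n})\big)$. Problem (PMI): variables $x$ and, for each $z,l,j$, an integer $y^{\mathrm{REC}}_{z,l,j}\in\{0,\dots,N^{\mathrm{REC}}_l-1\}$ and a real $y^{\mathrm{REC}}_{z,l,j,+}\in[0,u^{\mathrm{REC}}]$, and for each $z,l,k\in\mathcal{K}^{\mathrm{CP}}$ an integer $y^{\mathrm{CP}}_{z,l,k}\in\{0,\dots,N^{\mathrm{CP}}_{l,k}-1\}$ and a real $y^{\mathrm{CP}}_{z,l,k,+}\in[0,u^{\mathrm{CP}}]$; constraints (X) together with $u^{\mathrm{REC}}y^{\mathrm{REC}}_{z,l,j}+y^{\mathrm{REC}}_{z,l,j,+}\geq\sum_ix^{\mathrm{RB,RM}}_{\omega,z,t,i,j}$ and $u^{\mathrm{CP}}y^{\mathrm{CP}}_{z,l,k}+y^{\mathrm{CP}}_{z,l,k,+}\geq x^{\mathrm{CP,INV}}_{\omega,z,t,k}$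 for all $t\in\mathcal{T}_l,\omega\in\Omega_{\sigma_t}$; $u^{\mathrm{REC}}y^{\mathrm{REC}}_{z,l,j}+y^{\mathrm{REC}}_{z,l,j,+}\geq u^{\mathrm{REC}}y^{\mathrm{REC}}_{z,l-1,j}+y^{\mathrm{REC}}_{z,l-1,j,+}$ and $u^{\mathrm{CP}}y^{\mathrm{CP}}_{z,l,k}+y^{\mathrm{CP}}_{z,l,k,+}\geq u^{\mathrm{CP}}y^{\mathrm{CP}}_{z,l-1,k}+y^{\mathrm{CP}}_{z,l-1,k,+}$ ($l\geq2$). Objective: minimize $\sum_t(1-\gamma)^{t-1}\big(\overline{C}^{\mathrm{PL}}_t(y)+\sum_{\omega\in\Omega_{\sigma_t}}p_\omega C^{\mathrm{OP}}_{\omega,t}(x)\big)$ with $\overline{C}^{\mathrm{PL}}_t(y)=\sum_z\big(\sum_j(f^{\mathrm{REC}}_{z,j}(y^{\mathrm{REC}}_{z,l_t,j,+})+y^{\mathrm{REC}}_{z,l_t,j}f^{\mathrm{REC}}_{z,j}(u^{\mathrm{REC}}))+\sum_{k\in\mathcal{K}^{\mathrm{CP}}}(f^{\mathrm{CP}}_{z,k}(y^{\mathrm{CP}}_{z,l_t,k,+})+y^{\mathrm{CP}}_{z,l_t,k}f^{\mathrm{CP}}_{z,k}(u^{\mathrm{CP}}))\big)$. *)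

theory Defs
  imports "HOL-Analysis.Analysis"
begin

text \<open>Chemistries of type 'i, processes 'j, materials 'k, zones 'z, scenario-tree nodes 'w.
  Periods are the naturals 1..T (0 is the initial period), planning periods 1..L;
  the partition of the periods into planning periods is given by lp (l_t = lp t),
  and the stage of a period t is sigma t.\<close>

record ('i, 'j, 'k, 'z, 'w) rdata =
  I :: "'i set"
  J :: "'j set"
  K :: "'k set"
  KCP :: "'k set"
  Z :: "'z set"
  T :: nat
  L :: nat
  lp :: "nat \<Rightarrow> nat"
  sigma :: "nat \<Rightarrow> nat"
  Omega :: "nat \<Rightarrow> 'w set"
  prob :: "'w \<Rightarrow> real"
  anc :: "'w \<Rightarrow> nat \<Rightarrow> 'w"
  NREC :: "nat \<Rightarrow> nat"
  NCP :: "nat \<Rightarrow> 'k \<Rightarrow> nat"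
  DNB :: "'i \<Rightarrow> 'k \<Rightarrow> real"
  DCP :: "'k \<Rightarrow> 'k \<Rightarrow> real"
  DMC :: "'k \<Rightarrow> 'k \<Rightarrow> real"
  DREC :: "'k \<Rightarrow> 'i \<Rightarrow> 'j \<Rightarrow> real"
  dem :: "'w \<Rightarrow> 'z \<Rightarrow> nat \<Rightarrow> 'i \<Rightarrow> real"
  sRB :: "'w \<Rightarrow> 'z \<Rightarrow> nat \<Rightarrow> 'i \<Rightarrow> real"
  uREC :: real
  uCP :: real
  cNBNM :: "'w \<Rightarrow> nat \<Rightarrow> 'k \<Rightarrow> real"
  cCPNM :: "'w \<Rightarrow> nat \<Rightarrow> 'k \<Rightarrow> real"
  cMC :: "'w \<Rightarrow> 'z \<Rightarrow> nat \<Rightarrow> 'k \<Rightarrow> real"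
  cCP :: "'w \<Rightarrow> 'z \<Rightarrow> nat \<Rightarrow> 'k \<Rightarrow> real"
  cREC :: "'w \<Rightarrow> 'z \<Rightarrow> nat \<Rightarrow> 'i \<Rightarrow> 'j \<Rightarrow> real"
  cTRRM :: "'z \<Rightarrow> 'z \<Rightarrow> real"
  cTRRB :: "'z \<Rightarrow> 'z \<Rightarrow> real"
  val :: "'w \<Rightarrow> nat \<Rightarrow> 'k \<Rightarrow> real"
  eta :: real
  rho :: real
  gamma :: real
  fREC :: "'z \<Rightarrow> 'j \<Rightarrow> real \<Rightarrow> real"
  fCP :: "'z \<Rightarrow> 'k \<Rightarrow> real \<Rightarrow> real"

definition wf_data :: "('i, 'j, 'k, 'z, 'w, 'x) rdata_scheme \<Rightarrow> bool" where
  "wf_data D \<longleftrightarrow>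
     finite (I D) \<and> finite (J D) \<and> finite (K D) \<and> finite (Z D) \<and> KCP D \<subseteq> K D
   \<and> (\<forall>t\<in>{1..T D}. lp D t \<in> {1..L D})
   \<and> (\<forall>l\<in>{1..L D}. \<exists>t\<in>{1..T D}. lp D t = l)
   \<and> (\<forall>t\<in>{0..T D}. finite (Omega D (sigma D t)) \<and> Omega D (sigma D t) \<noteq> {})
   \<and> (\<forall>t\<in>{0..T D}. \<forall>t'\<in>{0..T D}. t \<le> t' \<longrightarrow>
        (\<forall>\<omega>\<in>Omega D (sigma D t'). anc D \<omega> t \<in> Omega D (sigma D t)))
   \<and> (\<forall>t\<in>{0..T D}. \<forall>\<omega>\<in>Omega D (sigma D t). anc D \<omega> t = \<omega>)
   \<and> (\<forall>l\<in>{1..L D}. NREC D l > 0 \<and> (\<forall>k\<in>KCP D. NCP D l k > 0))"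

text \<open>Operational variables x (each as a total function; only the entries on the
  index domains given in the paper enter constraints and objective).\<close>
record ('i, 'j, 'k, 'z, 'w) opvars =
  xNMNB :: "'w \<Rightarrow> 'z \<Rightarrow> nat \<Rightarrow> 'k \<Rightarrow> real"
  xRMINV :: "'w \<Rightarrow> 'z \<Rightarrow> nat \<Rightarrow> 'k \<Rightarrow> real"
  xRMS :: "'w \<Rightarrow> 'z \<Rightarrow> nat \<Rightarrow> 'k \<Rightarrow> real"
  xINV :: "'w \<Rightarrow> 'z \<Rightarrow> nat \<Rightarrow> 'k \<Rightarrow> real"
  xINVNB :: "'w \<Rightarrow> 'z \<Rightarrow> nat \<Rightarrow> 'k \<Rightarrow> real"
  xCPINV :: "'w \<Rightarrow> 'z \<Rightarrow> nat \<Rightarrow> 'k \<Rightarrow> real"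
  xNMCP :: "'w \<Rightarrow> 'z \<Rightarrow> nat \<Rightarrow> 'k \<Rightarrow> real"
  xMCCP :: "'w \<Rightarrow> 'z \<Rightarrow> nat \<Rightarrow> 'k \<Rightarrow> real"
  xINVMC :: "'w \<Rightarrow> 'z \<Rightarrow> nat \<Rightarrow> 'k \<Rightarrow> real"
  xRB :: "'w \<Rightarrow> 'z \<Rightarrow> nat \<Rightarrow> 'i \<Rightarrow> real"
  xRBRM :: "'w \<Rightarrow> 'z \<Rightarrow> nat \<Rightarrow> 'i \<Rightarrow> 'j \<Rightarrow> real"
  xTRRM :: "'w \<Rightarrow> 'z \<Rightarrow> 'z \<Rightarrow> nat \<Rightarrow> 'k \<Rightarrow> real"
  xTRRB :: "'w \<Rightarrow> 'z \<Rightarrow> 'z \<Rightarrow> nat \<Rightarrow> 'i \<Rightarrow> real"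

definition opfeas ::
  "('i, 'j, 'k, 'z, 'w, 'x) rdata_scheme \<Rightarrow> ('i, 'j, 'k, 'z, 'w, 'y) opvars_scheme \<Rightarrow> bool" where
  "opfeas D x \<longleftrightarrow>
     (\<forall>\<omega> z t k. 0 \<le> xNMNB x \<omega> z t k \<and> 0 \<le> xRMINV x \<omega> z t k \<and> 0 \<le> xRMS x \<omega> z t k
        \<and> 0 \<le> xINV x \<omega> z t k \<and> 0 \<le> xINVNB x \<omega> z t k \<and> 0 \<le> xCPINV x \<omega> z t k
        \<and> 0 \<le> xNMCP x \<omega> z t k \<and> 0 \<le> xMCCP x \<omega> z t k \<and> 0 \<le> xINVMC x \<omega> z t k)
   \<and> (\<forall>\<omega> z t i. 0 \<le> xRB x \<omega> z t i)
   \<and> (\<forall>\<omega> z t i j. 0 \<le> xRBRM x \<omega> z t i j)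
   \<and> (\<forall>\<omega> z z' t k. 0 \<le> xTRRM x \<omega> z z' t k)
   \<and> (\<forall>\<omega> z z' t i. 0 \<le> xTRRB x \<omega> z z' t i)
   \<and> (\<forall>\<omega>\<in>Omega D (sigma D 0). \<forall>z\<in>Z D.
        (\<forall>i\<in>I D. xRB x \<omega> z 0 i = 0) \<and> (\<forall>k\<in>K D. xINV x \<omega> z 0 k = 0))
   \<and> (\<forall>t\<in>{1..T D}. \<forall>z\<in>Z D. \<forall>\<omega>\<in>Omega D (sigma D t).
        (\<forall>k\<in>KCP D. (\<Sum>i\<in>I D. DNB D i k * dem D \<omega> z t i)
              = xNMNB x \<omega> z t k + xINVNB x \<omega> z t k)
      \<and> (\<forall>k\<in>K D - KCP D. (\<Sum>i\<in>I D. DNB D i k * dem D \<omega> z t i) = xNMNB x \<omega> z t k)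
      \<and> (\<forall>k\<in>K D - KCP D. (\<Sum>k'\<in>KCP D. DCP D k' k * xCPINV x \<omega> z t k')
              = xNMCP x \<omega> z t k + xMCCP x \<omega> z t k)
      \<and> (\<forall>k\<in>K D - KCP D. (\<Sum>k'\<in>K D - KCP D. DMC D k' k * xMCCP x \<omega> z t k')
              = xINVMC x \<omega> z t k)
      \<and> (\<forall>k\<in>K D. xRMINV x \<omega> z t k + xRMS x \<omega> z t k
              = (\<Sum>i\<in>I D. \<Sum>j\<in>J D. DREC D k i j * xRBRM x \<omega> z t i j))
      \<and> (\<forall>i\<in>I D. xRB x \<omega> z t i
              = xRB x (anc D \<omega> (t - 1)) z (t - 1) i
                + (\<Sum>z'\<in>Z D - {z}. xTRRB x \<omega> z' z t i - xTRRB x \<omega> z z' t i)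
                + sRB D \<omega> z t i - (\<Sum>j\<in>J D. xRBRM x \<omega> z t i j))
      \<and> (\<forall>k\<in>K D - KCP D. xINV x \<omega> z t k
              = xINV x (anc D \<omega> (t - 1)) z (t - 1) k
                + (\<Sum>z'\<in>Z D - {z}. xTRRM x \<omega> z' z t k - xTRRM x \<omega> z z' t k)
                + xRMINV x \<omega> z t k - xINVMC x \<omega> z t k)
      \<and> (\<forall>k\<in>KCP D. xINV x \<omega> z t k
              = xINV x (anc D \<omega> (t - 1)) z (t - 1) k
                + (\<Sum>z'\<in>Z D - {z}. xTRRM x \<omega> z' z t k - xTRRM x \<omega> z z' t k)
                + xRMINV x \<omega> z t k + xCPINV x \<omega> z t k - xINVNB x \<omega> z t k))"

definition Cop ::
  "('i, 'j, 'k, 'z, 'w, 'x) rdata_scheme \<Rightarrow> ('i, 'j, 'k, 'z, 'w, 'y) opvars_scheme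
     \<Rightarrow> 'w \<Rightarrow> nat \<Rightarrow> real" where
  "Cop D x \<omega> t = (\<Sum>z\<in>Z D.
       (\<Sum>k\<in>K D. cNBNM D \<omega> t k * xNMNB x \<omega> z t k)
     + (\<Sum>k\<in>K D - KCP D. cCPNM D \<omega> t k * xNMCP x \<omega> z t k + cMC D \<omega> z t k * xMCCP x \<omega> z t k)
     + (\<Sum>k\<in>K D. val D \<omega> t k * (rho D * xINV x \<omega> z t k - eta D * xRMS x \<omega> z t k))
     + (\<Sum>k\<in>KCP D. cCP D \<omega> z t k * xCPINV x \<omega> z t k)
     + (\<Sum>i\<in>I D. \<Sum>j\<in>J D. cREC D \<omega> z t i j * xRBRM x \<omega> z t i j)
     + (\<Sum>z'\<in>Z D - {z}. (\<Sum>k\<in>K D. cTRRM D z z' * xTRRM x \<omega> z z' t k)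
                        + (\<Sum>i\<in>I D. cTRRB D z z' * xTRRB x \<omega> z z' t i)))"

text \<open>Problem (P). yR z l j n = y^REC_{z,l,j,n}, yC z l k n = y^CP_{z,l,k,n}.\<close>
definition P_feas ::
  "('i, 'j, 'k, 'z, 'w, 'x) rdata_scheme \<Rightarrow> ('i, 'j, 'k, 'z, 'w, 'y) opvars_scheme
     \<Rightarrow> ('z \<Rightarrow> nat \<Rightarrow> 'j \<Rightarrow> nat \<Rightarrow> real) \<Rightarrow> ('z \<Rightarrow> nat \<Rightarrow> 'k \<Rightarrow> nat \<Rightarrow> real) \<Rightarrow> bool" where
  "P_feas D x yR yC \<longleftrightarrow> opfeas D x
   \<and> (\<forall>z\<in>Z D. \<forall>l\<in>{1..L D}. \<forall>j\<in>J D. \<forall>n\<in>{1..NREC D l}.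
        0 \<le> yR z l j n \<and> yR z l j n \<le> uREC D)
   \<and> (\<forall>z\<in>Z D. \<forall>l\<in>{1..L D}. \<forall>k\<in>KCP D. \<forall>n\<in>{1..NCP D l k}.
        0 \<le> yC z l k n \<and> yC z l k n \<le> uCP D)
   \<and> (\<forall>z\<in>Z D. \<forall>l\<in>{1..L D}. \<forall>t\<in>{1..T D}. lp D t = l \<longrightarrow> (\<forall>\<omega>\<in>Omega D (sigma D t).
        (\<forall>j\<in>J D. (\<Sum>n=1..NREC D l. yR z l j n) \<ge> (\<Sum>i\<in>I D. xRBRM x \<omega> z t i j))
      \<and> (\<forall>k\<in>KCP D. (\<Sum>n=1..NCP D l k. yC z l k n) \<ge> xCPINV x \<omega> z t k)))
   \<and> (\<forall>z\<in>Z D. \<forall>l\<in>{2..L D}.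
        (\<forall>j\<in>J D. (\<Sum>n=1..NREC D l. yR z l j n) \<ge> (\<Sum>n=1..NREC D (l - 1). yR z (l - 1) j n))
      \<and> (\<forall>k\<in>KCP D. (\<Sum>n=1..NCP D l k. yC z l k n) \<ge> (\<Sum>n=1..NCP D (l - 1) k. yC z (l - 1) k n)))"

definition Cpl ::
  "('i, 'j, 'k, 'z, 'w, 'x) rdata_scheme
     \<Rightarrow> ('z \<Rightarrow> nat \<Rightarrow> 'j \<Rightarrow> nat \<Rightarrow> real) \<Rightarrow> ('z \<Rightarrow> nat \<Rightarrow> 'k \<Rightarrow> nat \<Rightarrow> real) \<Rightarrow> nat \<Rightarrow> real" where
  "Cpl D yR yC t = (\<Sum>z\<in>Z D.
       (\<Sum>j\<in>J D. \<Sum>n=1..NREC D (lp D t). fREC D z j (yR z (lp D t) j n))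
     + (\<Sum>k\<in>KCP D. \<Sum>n=1..NCP D (lp D t) k. fCP D z k (yC z (lp D t) k n)))"

definition P_obj ::
  "('i, 'j, 'k, 'z, 'w, 'x) rdata_scheme \<Rightarrow> ('i, 'j, 'k, 'z, 'w, 'y) opvars_scheme
     \<Rightarrow> ('z \<Rightarrow> nat \<Rightarrow> 'j \<Rightarrow> nat \<Rightarrow> real) \<Rightarrow> ('z \<Rightarrow> nat \<Rightarrow> 'k \<Rightarrow> nat \<Rightarrow> real) \<Rightarrow> real" where
  "P_obj D x yR yC = (\<Sum>t=1..T D. (1 - gamma D) ^ (t - 1) *
       (Cpl D yR yC t + (\<Sum>\<omega>\<in>Omega D (sigma D t). prob D \<omega> * Cop D x \<omega> t)))"

definition P_value :: "('i, 'j, 'k, 'z, 'w, 'x) rdata_scheme \<Rightarrow> ereal" where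
  "P_value D = (INF (x, yR, yC) \<in> {(x :: ('i, 'j, 'k, 'z, 'w) opvars, yR, yC). P_feas D x yR yC}.
                  ereal (P_obj D x yR yC))"

text \<open>Problem (PMI). nR z l j = y^REC_{z,l,j} (integer in 0..N^REC_l - 1),
  pR z l j = y^REC_{z,l,j,+}; similarly nC, pC for cathode powders.\<close>
definition PMI_feas ::
  "('i, 'j, 'k, 'z, 'w, 'x) rdata_scheme \<Rightarrow> ('i, 'j, 'k, 'z, 'w, 'y) opvars_scheme
     \<Rightarrow> ('z \<Rightarrow> nat \<Rightarrow> 'j \<Rightarrow> int) \<Rightarrow> ('z \<Rightarrow> nat \<Rightarrow> 'j \<Rightarrow> real)
     \<Rightarrow> ('z \<Rightarrow> nat \<Rightarrow> 'k \<Rightarrow> int) \<Rightarrow> ('z \<Rightarrow> nat \<Rightarrow> 'k \<Rightarrow> real) \<Rightarrow> bool" where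
  "PMI_feas D x nR pR nC pC \<longleftrightarrow> opfeas D x
   \<and> (\<forall>z\<in>Z D. \<forall>l\<in>{1..L D}. \<forall>j\<in>J D.
        0 \<le> nR z l j \<and> nR z l j \<le> int (NREC D l) - 1 \<and> 0 \<le> pR z l j \<and> pR z l j \<le> uREC D)
   \<and> (\<forall>z\<in>Z D. \<forall>l\<in>{1..L D}. \<forall>k\<in>KCP D.
        0 \<le> nC z l k \<and> nC z l k \<le> int (NCP D l k) - 1 \<and> 0 \<le> pC z l k \<and> pC z l k \<le> uCP D)
   \<and> (\<forall>z\<in>Z D. \<forall>l\<in>{1..L D}. \<forall>t\<in>{1..T D}. lp D t = l \<longrightarrow> (\<forall>\<omega>\<in>Omega D (sigma D t).
        (\<forall>j\<in>J D. uREC D * of_int (nR z l j) + pR z l j \<ge> (\<Sum>i\<in>I D. xRBRM x \<omega> z t i j))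
      \<and> (\<forall>k\<in>KCP D. uCP D * of_int (nC z l k) + pC z l k \<ge> xCPINV x \<omega> z t k)))
   \<and> (\<forall>z\<in>Z D. \<forall>l\<in>{2..L D}.
        (\<forall>j\<in>J D. uREC D * of_int (nR z l j) + pR z l j
                    \<ge> uREC D * of_int (nR z (l - 1) j) + pR z (l - 1) j)
      \<and> (\<forall>k\<in>KCP D. uCP D * of_int (nC z l k) + pC z l k
                    \<ge> uCP D * of_int (nC z (l - 1) k) + pC z (l - 1) k))"

definition Cpl_bar ::
  "('i, 'j, 'k, 'z, 'w, 'x) rdata_scheme
     \<Rightarrow> ('z \<Rightarrow> nat \<Rightarrow> 'j \<Rightarrow> int) \<Rightarrow> ('z \<Rightarrow> nat \<Rightarrow> 'j \<Rightarrow> real)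
     \<Rightarrow> ('z \<Rightarrow> nat \<Rightarrow> 'k \<Rightarrow> int) \<Rightarrow> ('z \<Rightarrow> nat \<Rightarrow> 'k \<Rightarrow> real) \<Rightarrow> nat \<Rightarrow> real" where
  "Cpl_bar D nR pR nC pC t = (\<Sum>z\<in>Z D.
       (\<Sum>j\<in>J D. fREC D z j (pR z (lp D t) j) + of_int (nR z (lp D t) j) * fREC D z j (uREC D))
     + (\<Sum>k\<in>KCP D. fCP D z k (pC z (lp D t) k) + of_int (nC z (lp D t) k) * fCP D z k (uCP D)))"

definition PMI_obj ::
  "('i, 'j, 'k, 'z, 'w, 'x) rdata_scheme \<Rightarrow> ('i, 'j, 'k, 'z, 'w, 'y) opvars_scheme
     \<Rightarrow> ('z \<Rightarrow> nat \<Rightarrow> 'j \<Rightarrow> int) \<Rightarrow> ('z \<Rightarrow> nat \<Rightarrow> 'j \<Rightarrow> real)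
     \<Rightarrow> ('z \<Rightarrow> nat \<Rightarrow> 'k \<Rightarrow> int) \<Rightarrow> ('z \<Rightarrow> nat \<Rightarrow> 'k \<Rightarrow> real) \<Rightarrow> real" where
  "PMI_obj D x nR pR nC pC = (\<Sum>t=1..T D. (1 - gamma D) ^ (t - 1) *
       (Cpl_bar D nR pR nC pC t + (\<Sum>\<omega>\<in>Omega D (sigma D t). prob D \<omega> * Cop D x \<omega> t)))"

definition PMI_value :: "('i, 'j, 'k, 'z, 'w, 'x) rdata_scheme \<Rightarrow> ereal" where
  "PMI_value D = (INF (x, nR, pR, nC, pC) \<in>
       {(x :: ('i, 'j, 'k, 'z, 'w) opvars, nR, pR, nC, pC). PMI_feas D x nR pR nC pC}.
       ereal (PMI_obj D x nR pR nC pC))"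

end

theory Submission
  imports Defs
begin

text \<open>Both problems see the facility sizes only through the capacity installed per zone,
  planning period and process (or cathode powder), and through the planning cost.
  A (PMI) solution with n full facilities of size u and one of size p becomes a (P) solution
  with sizes u, ..., u, p, 0, ..., 0; it has the same capacity and, as f 0 = 0, the same cost.
  Conversely, for concave f, pushing two sizes a, b apart to x \<le> a, b \<le> y with x + y = a + b
  does not increase f a + f b. Merging the sizes of a (P) solution greedily in this way leaves
  at most N - 1 full facilities and one partial one: a (PMI) solution with the same capacity and
  no larger cost.\<close>

lemma concave_on_spread_le:
  fixes f :: "real \<Rightarrow> real"
  assumes f: "concave_on S f" and S: "x \<in> S" "y \<in> S"
    and between: "x \<le> a" "a \<le> y" "x \<le> b" "b \<le> y" and "a + b = x + y"
  shows "f x + f y \<le> f a + f b"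
proof (cases "x = y")
  case True
  with between show ?thesis by simp
next
  case False
  with between have "x < y" by simp
  define t where "t = (a - x) / (y - x)"
  have t: "0 \<le> t" "t \<le> 1" using between \<open>x < y\<close> by (auto simp: t_def divide_simps)
  have "t * (y - x) = a - x" using \<open>x < y\<close> by (simp add: t_def)
  then have a: "a = (1 - t) *\<^sub>R x + t *\<^sub>R y" and b: "b = (1 - (1 - t)) *\<^sub>R x + (1 - t) *\<^sub>R y"
    using \<open>a + b = x + y\<close> by (simp_all add: algebra_simps)
  have "(1 - t) * f x + t * f y \<le> f a"
    unfolding a using concave_onD[OF f t S] .
  moreover have "(1 - (1 - t)) * f x + (1 - t) * f y \<le> f b"
    unfolding b using concave_onD[OF f _ _ S, of "1 - t"] t by simp
  ultimately show ?thesis by (simp add: algebra_simps)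
qed

lemma concave_sum_consolidate:
  fixes f :: "real \<Rightarrow> real" and y :: "'a \<Rightarrow> real"
  assumes f: "concave_on {0..} f" "f 0 = 0"
    and "finite A" "A \<noteq> {}" and y: "\<forall>n\<in>A. 0 \<le> y n \<and> y n \<le> u"
  shows "\<exists>m r. m < card A \<and> 0 \<le> r \<and> r \<le> u \<and> real m * u + r = sum y A
           \<and> real m * f u + f r \<le> (\<Sum>n\<in>A. f (y n))"
  using \<open>finite A\<close> \<open>A \<noteq> {}\<close> y
proof (induction A rule: finite_ne_induct)
  case (singleton a)
  then show ?case using f by (intro exI[of _ 0] exI[of _ "y a"]) auto
next
  case (insert a A)
  then obtain m r where mr: "m < card A" "0 \<le> r" "r \<le> u" "real m * u + r = sum y A"
      "real m * f u + f r \<le> (\<Sum>n\<in>A. f (y n))" by auto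
  have ya: "0 \<le> y a" "y a \<le> u" using insert.prems by auto
  show ?case
  proof (cases "r + y a \<le> u")
    case True
    have "f 0 + f (r + y a) \<le> f r + f (y a)"
      by (rule concave_on_spread_le[OF f(1)]) (use mr ya in auto)
    with mr ya True insert f(2) show ?thesis
      by (intro exI[of _ m] exI[of _ "r + y a"]) auto
  next
    case False
    have "f (r + y a - u) + f u \<le> f r + f (y a)"
      by (rule concave_on_spread_le[OF f(1)]) (use mr ya False in auto)
    with mr ya False insert show ?thesis
      by (intro exI[of _ "Suc m"] exI[of _ "r + y a - u"]) (auto simp: algebra_simps)
  qed
qed

lemma concave_blocks_consolidate:
  fixes f :: "'z \<Rightarrow> 'a \<Rightarrow> real \<Rightarrow> real" and y :: "'z \<Rightarrow> nat \<Rightarrow> 'a \<Rightarrow> nat \<Rightarrow> real"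
  assumes f: "\<And>z a. concave_on {0..} (f z a)" "\<And>z a. f z a 0 = 0"
    and y: "\<forall>z\<in>Zs. \<forall>l\<in>Ls. \<forall>a\<in>As. 0 < N l a \<and> (\<forall>n\<in>{1..N l a}. 0 \<le> y z l a n \<and> y z l a n \<le> u)"
  shows "\<exists>m p. \<forall>z\<in>Zs. \<forall>l\<in>Ls. \<forall>a\<in>As.
           0 \<le> m z l a \<and> m z l a \<le> int (N l a) - 1 \<and> 0 \<le> p z l a \<and> p z l a \<le> u
         \<and> u * of_int (m z l a) + p z l a = (\<Sum>n=1..N l a. y z l a n)
         \<and> of_int (m z l a) * f z a u + f z a (p z l a) \<le> (\<Sum>n=1..N l a. f z a (y z l a n))"
proof -
  have "\<exists>m r. (z \<in> Zs \<and> l \<in> Ls \<and> a \<in> As) \<longrightarrow>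
           0 \<le> m \<and> m \<le> int (N l a) - 1 \<and> 0 \<le> r \<and> r \<le> u
         \<and> u * of_int m + r = (\<Sum>n=1..N l a. y z l a n)
         \<and> of_int m * f z a u + f z a r \<le> (\<Sum>n=1..N l a. f z a (y z l a n))" for z l a
  proof (cases "z \<in> Zs \<and> l \<in> Ls \<and> a \<in> As")
    case True
    with y have "0 < N l a" and bounds: "\<forall>n\<in>{1..N l a}. 0 \<le> y z l a n \<and> y z l a n \<le> u"
      by auto
    then have "{1..N l a} \<noteq> {}" by simp
    from concave_sum_consolidate[OF f(1)[of z a] f(2)[of z a] _ this bounds] obtain m r where
      "m < N l a" "0 \<le> r" "r \<le> u" "real m * u + r = (\<Sum>n=1..N l a. y z l a n)"
      "real m * f z a u + f z a r \<le> (\<Sum>n=1..N l a. f z a (y z l a n))" by auto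
    then show ?thesis by (intro exI[of _ "int m"] exI[of _ r]) (auto simp: mult.commute)
  qed auto
  then show ?thesis by metis
qed

definition staircase :: "nat \<Rightarrow> real \<Rightarrow> real \<Rightarrow> nat \<Rightarrow> real" where
  "staircase m a b n = (if n \<le> m then a else if n = Suc m then b else 0)"

lemma sum_staircase:
  fixes g :: "real \<Rightarrow> real"
  assumes "m < N"
  shows "(\<Sum>n=1..N. g (staircase m a b n)) = real m * g a + g b + real (N - Suc m) * g 0"
proof -
  obtain k where N: "N = Suc m + k" using assms less_imp_Suc_add by blast
  have "(\<Sum>n=1..m. g (staircase m a b n)) = real m * g a"
    by (simp add: staircase_def)
  then have "(\<Sum>n=1..Suc m + k. g (staircase m a b n)) = real m * g a + g b + real k * g 0"
    by (induction k) (simp_all add: staircase_def algebra_simps)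
  with N show ?thesis by simp
qed

lemma sum_staircase_of_int:
  fixes g :: "real \<Rightarrow> real"
  assumes "0 \<le> m" "m \<le> int N - 1" "g 0 = 0"
  shows "(\<Sum>n=1..N. g (staircase (nat m) a b n)) = of_int m * g a + g b"
  using sum_staircase[of "nat m" N g a b] assms by simp

definition capacity_feas ::
  "('i, 'j, 'k, 'z, 'w, 'x) rdata_scheme \<Rightarrow> ('i, 'j, 'k, 'z, 'w, 'y) opvars_scheme
     \<Rightarrow> ('z \<Rightarrow> nat \<Rightarrow> 'j \<Rightarrow> real) \<Rightarrow> ('z \<Rightarrow> nat \<Rightarrow> 'k \<Rightarrow> real) \<Rightarrow> bool" where
  "capacity_feas D x capR capC \<longleftrightarrow>
     (\<forall>z\<in>Z D. \<forall>l\<in>{1..L D}. \<forall>t\<in>{1..T D}. lp D t = l \<longrightarrow> (\<forall>\<omega>\<in>Omega D (sigma D t).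
        (\<forall>j\<in>J D. capR z l j \<ge> (\<Sum>i\<in>I D. xRBRM x \<omega> z t i j))
      \<and> (\<forall>k\<in>KCP D. capC z l k \<ge> xCPINV x \<omega> z t k)))
   \<and> (\<forall>z\<in>Z D. \<forall>l\<in>{2..L D}.
        (\<forall>j\<in>J D. capR z l j \<ge> capR z (l - 1) j) \<and> (\<forall>k\<in>KCP D. capC z l k \<ge> capC z (l - 1) k))"

lemma capacity_feas_cong:
  assumes "capacity_feas D x capR capC"
    and "\<forall>z\<in>Z D. \<forall>l\<in>{1..L D}. \<forall>j\<in>J D. capR' z l j = capR z l j"
    and "\<forall>z\<in>Z D. \<forall>l\<in>{1..L D}. \<forall>k\<in>KCP D. capC' z l k = capC z l k"
  shows "capacity_feas D x capR' capC'"
proof -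
  have "capR' z l j = capR z l j" if "z \<in> Z D" "1 \<le> l" "l \<le> L D" "j \<in> J D" for z l j
    using assms(2) that by simp
  moreover have "capC' z l k = capC z l k" if "z \<in> Z D" "1 \<le> l" "l \<le> L D" "k \<in> KCP D" for z l k
    using assms(3) that by simp
  ultimately show ?thesis
    using assms(1) unfolding capacity_feas_def by auto
qed

lemma P_feas_iff:
  "P_feas D x yR yC \<longleftrightarrow> opfeas D x
     \<and> (\<forall>z\<in>Z D. \<forall>l\<in>{1..L D}. \<forall>j\<in>J D. \<forall>n\<in>{1..NREC D l}. 0 \<le> yR z l j n \<and> yR z l j n \<le> uREC D)
     \<and> (\<forall>z\<in>Z D. \<forall>l\<in>{1..L D}. \<forall>k\<in>KCP D. \<forall>n\<in>{1..NCP D l k}. 0 \<le> yC z l k n \<and> yC z l k n \<le> uCP D)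
     \<and> capacity_feas D x (\<lambda>z l j. \<Sum>n=1..NREC D l. yR z l j n) (\<lambda>z l k. \<Sum>n=1..NCP D l k. yC z l k n)"
  unfolding P_feas_def capacity_feas_def by simp

lemma PMI_feas_iff:
  "PMI_feas D x nR pR nC pC \<longleftrightarrow> opfeas D x
     \<and> (\<forall>z\<in>Z D. \<forall>l\<in>{1..L D}. \<forall>j\<in>J D.
          0 \<le> nR z l j \<and> nR z l j \<le> int (NREC D l) - 1 \<and> 0 \<le> pR z l j \<and> pR z l j \<le> uREC D)
     \<and> (\<forall>z\<in>Z D. \<forall>l\<in>{1..L D}. \<forall>k\<in>KCP D.
          0 \<le> nC z l k \<and> nC z l k \<le> int (NCP D l k) - 1 \<and> 0 \<le> pC z l k \<and> pC z l k \<le> uCP D)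
     \<and> capacity_feas D x (\<lambda>z l j. uREC D * of_int (nR z l j) + pR z l j)
                         (\<lambda>z l k. uCP D * of_int (nC z l k) + pC z l k)"
  unfolding PMI_feas_def capacity_feas_def by simp

definition discounted_cost ::
  "('i, 'j, 'k, 'z, 'w, 'x) rdata_scheme \<Rightarrow> ('i, 'j, 'k, 'z, 'w, 'y) opvars_scheme
     \<Rightarrow> (nat \<Rightarrow> real) \<Rightarrow> real" where
  "discounted_cost D x C = (\<Sum>t=1..T D. (1 - gamma D) ^ (t - 1) *
       (C t + (\<Sum>\<omega>\<in>Omega D (sigma D t). prob D \<omega> * Cop D x \<omega> t)))"

lemma P_obj_eq_discounted_cost: "P_obj D x yR yC = discounted_cost D x (Cpl D yR yC)"
  unfolding P_obj_def discounted_cost_def ..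

lemma PMI_obj_eq_discounted_cost: "PMI_obj D x nR pR nC pC = discounted_cost D x (Cpl_bar D nR pR nC pC)"
  unfolding PMI_obj_def discounted_cost_def ..

lemma discounted_cost_mono:
  assumes "gamma D \<le> 1" "\<forall>t\<in>{1..T D}. C t \<le> C' t"
  shows "discounted_cost D x C \<le> discounted_cost D x C'"
  unfolding discounted_cost_def using assms by (intro sum_mono mult_left_mono) auto

lemma discounted_cost_cong:
  assumes "\<forall>t\<in>{1..T D}. C t = C' t"
  shows "discounted_cost D x C = discounted_cost D x C'"
  unfolding discounted_cost_def using assms by simp

lemma Cpl_bar_le_Cpl:
  assumes "lp D t \<in> {1..L D}"
    and "\<forall>z\<in>Z D. \<forall>l\<in>{1..L D}. \<forall>j\<in>J D. of_int (nR z l j) * fREC D z j (uREC D) + fREC D z j (pR z l j)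
           \<le> (\<Sum>n=1..NREC D l. fREC D z j (yR z l j n))"
    and "\<forall>z\<in>Z D. \<forall>l\<in>{1..L D}. \<forall>k\<in>KCP D. of_int (nC z l k) * fCP D z k (uCP D) + fCP D z k (pC z l k)
           \<le> (\<Sum>n=1..NCP D l k. fCP D z k (yC z l k n))"
  shows "Cpl_bar D nR pR nC pC t \<le> Cpl D yR yC t"
  unfolding Cpl_bar_def Cpl_def using assms by (intro sum_mono add_mono) (auto simp: add.commute)

lemma Cpl_eq_Cpl_bar:
  assumes "lp D t \<in> {1..L D}"
    and "\<forall>z\<in>Z D. \<forall>l\<in>{1..L D}. \<forall>j\<in>J D. (\<Sum>n=1..NREC D l. fREC D z j (yR z l j n))
           = of_int (nR z l j) * fREC D z j (uREC D) + fREC D z j (pR z l j)"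
    and "\<forall>z\<in>Z D. \<forall>l\<in>{1..L D}. \<forall>k\<in>KCP D. (\<Sum>n=1..NCP D l k. fCP D z k (yC z l k n))
           = of_int (nC z l k) * fCP D z k (uCP D) + fCP D z k (pC z l k)"
  shows "Cpl D yR yC t = Cpl_bar D nR pR nC pC t"
  unfolding Cpl_bar_def Cpl_def using assms by (intro sum.cong refl arg_cong2[where f = "(+)"]) auto

lemma P_feas_consolidate:
  assumes wf: "wf_data D" and gamma: "gamma D \<le> 1"
    and fREC: "\<And>z j. concave_on {0..} (fREC D z j)" "\<And>z j. fREC D z j 0 = 0"
    and fCP: "\<And>z k. concave_on {0..} (fCP D z k)" "\<And>z k. fCP D z k 0 = 0"
    and feas: "P_feas D x yR yC"
  obtains nR pR nC pC where "PMI_feas D x nR pR nC pC"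
    "PMI_obj D x nR pR nC pC \<le> P_obj D x yR yC"
proof -
  from wf have lp: "\<forall>t\<in>{1..T D}. lp D t \<in> {1..L D}"
    and N: "\<forall>l\<in>{1..L D}. 0 < NREC D l \<and> (\<forall>k\<in>KCP D. 0 < NCP D l k)"
    unfolding wf_data_def by auto
  from feas have opfeas: "opfeas D x"
    and yR: "\<forall>z\<in>Z D. \<forall>l\<in>{1..L D}. \<forall>j\<in>J D. \<forall>n\<in>{1..NREC D l}. 0 \<le> yR z l j n \<and> yR z l j n \<le> uREC D"
    and yC: "\<forall>z\<in>Z D. \<forall>l\<in>{1..L D}. \<forall>k\<in>KCP D. \<forall>n\<in>{1..NCP D l k}. 0 \<le> yC z l k n \<and> yC z l k n \<le> uCP D"
    and cap: "capacity_feas D x (\<lambda>z l j. \<Sum>n=1..NREC D l. yR z l j n) (\<lambda>z l k. \<Sum>n=1..NCP D l k. yC z l k n)"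
    unfolding P_feas_iff by auto
  obtain nR pR where R: "\<forall>z\<in>Z D. \<forall>l\<in>{1..L D}. \<forall>j\<in>J D.
      0 \<le> nR z l j \<and> nR z l j \<le> int (NREC D l) - 1 \<and> 0 \<le> pR z l j \<and> pR z l j \<le> uREC D
    \<and> uREC D * of_int (nR z l j) + pR z l j = (\<Sum>n=1..NREC D l. yR z l j n)
    \<and> of_int (nR z l j) * fREC D z j (uREC D) + fREC D z j (pR z l j) \<le> (\<Sum>n=1..NREC D l. fREC D z j (yR z l j n))"
    using concave_blocks_consolidate[where f = "fREC D", OF fREC,
        of "Z D" "{1..L D}" "J D" "\<lambda>l j. NREC D l" yR "uREC D"] N yR
    by auto
  obtain nC pC where C: "\<forall>z\<in>Z D. \<forall>l\<in>{1..L D}. \<forall>k\<in>KCP D.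
      0 \<le> nC z l k \<and> nC z l k \<le> int (NCP D l k) - 1 \<and> 0 \<le> pC z l k \<and> pC z l k \<le> uCP D
    \<and> uCP D * of_int (nC z l k) + pC z l k = (\<Sum>n=1..NCP D l k. yC z l k n)
    \<and> of_int (nC z l k) * fCP D z k (uCP D) + fCP D z k (pC z l k) \<le> (\<Sum>n=1..NCP D l k. fCP D z k (yC z l k n))"
    using concave_blocks_consolidate[where f = "fCP D", OF fCP,
        of "Z D" "{1..L D}" "KCP D" "NCP D" yC "uCP D"] N yC
    by auto
  have "PMI_feas D x nR pR nC pC"
    unfolding PMI_feas_iff using opfeas R C capacity_feas_cong[OF cap] by auto
  moreover have "PMI_obj D x nR pR nC pC \<le> P_obj D x yR yC"
    unfolding PMI_obj_eq_discounted_cost P_obj_eq_discounted_cost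
    using lp R C by (intro discounted_cost_mono[OF gamma] ballI Cpl_bar_le_Cpl) auto
  ultimately show thesis by (rule that)
qed

lemma PMI_feas_spread:
  assumes "0 \<le> uREC D" "0 \<le> uCP D" and wf: "wf_data D"
    and fREC: "\<And>z j. fREC D z j 0 = 0" and fCP: "\<And>z k. fCP D z k 0 = 0"
    and feas: "PMI_feas D x nR pR nC pC"
  obtains yR yC where "P_feas D x yR yC" "P_obj D x yR yC = PMI_obj D x nR pR nC pC"
proof -
  define yR where "yR z l j = staircase (nat (nR z l j)) (uREC D) (pR z l j)" for z l j
  define yC where "yC z l k = staircase (nat (nC z l k)) (uCP D) (pC z l k)" for z l k
  from wf have lp: "\<forall>t\<in>{1..T D}. lp D t \<in> {1..L D}"
    unfolding wf_data_def by auto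
  from feas have opfeas: "opfeas D x"
    and R: "\<forall>z\<in>Z D. \<forall>l\<in>{1..L D}. \<forall>j\<in>J D.
          0 \<le> nR z l j \<and> nR z l j \<le> int (NREC D l) - 1 \<and> 0 \<le> pR z l j \<and> pR z l j \<le> uREC D"
    and C: "\<forall>z\<in>Z D. \<forall>l\<in>{1..L D}. \<forall>k\<in>KCP D.
          0 \<le> nC z l k \<and> nC z l k \<le> int (NCP D l k) - 1 \<and> 0 \<le> pC z l k \<and> pC z l k \<le> uCP D"
    and cap: "capacity_feas D x (\<lambda>z l j. uREC D * of_int (nR z l j) + pR z l j)
                                (\<lambda>z l k. uCP D * of_int (nC z l k) + pC z l k)"
    unfolding PMI_feas_iff by auto
  have sumR: "(\<Sum>n=1..NREC D l. g (yR z l j n)) = of_int (nR z l j) * g (uREC D) + g (pR z l j)"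
    if "z \<in> Z D" "l \<in> {1..L D}" "j \<in> J D" "g 0 = 0" for z l j and g :: "real \<Rightarrow> real"
    unfolding yR_def using R that by (intro sum_staircase_of_int) auto
  have sumC: "(\<Sum>n=1..NCP D l k. g (yC z l k n)) = of_int (nC z l k) * g (uCP D) + g (pC z l k)"
    if "z \<in> Z D" "l \<in> {1..L D}" "k \<in> KCP D" "g 0 = 0" for z l k and g :: "real \<Rightarrow> real"
    unfolding yC_def using C that by (intro sum_staircase_of_int) auto
  have "P_feas D x yR yC"
    unfolding P_feas_iff
  proof (intro conjI)
    show "capacity_feas D x (\<lambda>z l j. \<Sum>n=1..NREC D l. yR z l j n) (\<lambda>z l k. \<Sum>n=1..NCP D l k. yC z l k n)"
      using sumR[where g = "\<lambda>y. y"] sumC[where g = "\<lambda>y. y"]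
      by (intro capacity_feas_cong[OF cap]) (auto simp: mult.commute)
  qed (use opfeas R C assms in \<open>auto simp: yR_def yC_def staircase_def\<close>)
  moreover have "P_obj D x yR yC = PMI_obj D x nR pR nC pC"
    unfolding PMI_obj_eq_discounted_cost P_obj_eq_discounted_cost
    using lp sumR[where g = "fREC D _ _"] sumC[where g = "fCP D _ _"] fREC fCP
    by (intro discounted_cost_cong ballI Cpl_eq_Cpl_bar) auto
  ultimately show thesis by (rule that)
qed

lemma P_value_le_PMI_value:
  fixes D :: "('i, 'j, 'k, 'z, 'w) rdata"
  assumes "0 \<le> uREC D" "0 \<le> uCP D" "wf_data D"
    and "\<And>z j. fREC D z j 0 = 0" "\<And>z k. fCP D z k 0 = 0"
  shows "P_value D \<le> PMI_value D"
  unfolding P_value_def PMI_value_def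
proof (rule INF_mono, clarify)
  fix x :: "('i, 'j, 'k, 'z, 'w) opvars" and nR pR nC pC
  assume "PMI_feas D x nR pR nC pC"
  then obtain yR yC where "P_feas D x yR yC" "P_obj D x yR yC = PMI_obj D x nR pR nC pC"
    by (rule PMI_feas_spread[OF assms])
  then show "\<exists>y \<in> {(x' :: ('i, 'j, 'k, 'z, 'w) opvars, yR, yC). P_feas D x' yR yC}.
      (case y of (x', yR, yC) \<Rightarrow> ereal (P_obj D x' yR yC)) \<le> ereal (PMI_obj D x nR pR nC pC)"
    by (intro bexI[of _ "(x, yR, yC)"]) auto
qed

lemma PMI_value_le_P_value:
  fixes D :: "('i, 'j, 'k, 'z, 'w) rdata"
  assumes "wf_data D" "gamma D \<le> 1"
    and "\<And>z j. concave_on {0..} (fREC D z j)" "\<And>z j. fREC D z j 0 = 0"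
    and "\<And>z k. concave_on {0..} (fCP D z k)" "\<And>z k. fCP D z k 0 = 0"
  shows "PMI_value D \<le> P_value D"
  unfolding P_value_def PMI_value_def
proof (rule INF_mono, clarify)
  fix x :: "('i, 'j, 'k, 'z, 'w) opvars" and yR yC
  assume "P_feas D x yR yC"
  then obtain nR pR nC pC where "PMI_feas D x nR pR nC pC" "PMI_obj D x nR pR nC pC \<le> P_obj D x yR yC"
    by (rule P_feas_consolidate[OF assms])
  then show "\<exists>y \<in> {(x' :: ('i, 'j, 'k, 'z, 'w) opvars, nR, pR, nC, pC). PMI_feas D x' nR pR nC pC}.
      (case y of (x', nR, pR, nC, pC) \<Rightarrow> ereal (PMI_obj D x' nR pR nC pC)) \<le> ereal (P_obj D x yR yC)"
    by (intro bexI[of _ "(x, nR, pR, nC, pC)"]) auto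
qed

theorem theorem2:
  fixes D :: "('i, 'j, 'k, 'z, 'w) rdata"
  assumes wf: "wf_data D"
    and nonneg_d: "\<forall>\<omega> z t i. 0 \<le> dem D \<omega> z t i"
    and nonneg_s: "\<forall>\<omega> z t i. 0 \<le> sRB D \<omega> z t i"
    and nonneg_c: "\<forall>\<omega> t k. 0 \<le> cNBNM D \<omega> t k \<and> 0 \<le> cCPNM D \<omega> t k"
      "\<forall>\<omega> z t k. 0 \<le> cMC D \<omega> z t k \<and> 0 \<le> cCP D \<omega> z t k"
      "\<forall>\<omega> z t i j. 0 \<le> cREC D \<omega> z t i j"
      "\<forall>z z'. 0 \<le> cTRRM D z z' \<and> 0 \<le> cTRRB D z z'"
    and nonneg_v: "\<forall>\<omega> t k. 0 \<le> val D \<omega> t k"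
    and nonneg_p: "\<forall>\<omega>. 0 \<le> prob D \<omega>"
    and nonneg_Delta: "\<forall>i k. 0 \<le> DNB D i k" "\<forall>k k'. 0 \<le> DCP D k k'"
      "\<forall>k k'. 0 \<le> DMC D k k'" "\<forall>k i j. 0 \<le> DREC D k i j"
    and uREC_pos: "uREC D > 0" and uCP_pos: "uCP D > 0"
    and eta: "0 \<le> eta D" "eta D \<le> 1" and rho: "0 \<le> rho D"
    and gamma: "0 \<le> gamma D" "gamma D < 1"
    and fREC: "\<forall>z j. concave_on {0..} (fREC D z j) \<and> mono_on {0..} (fREC D z j)
                       \<and> fREC D z j 0 = 0"
    and fCP: "\<forall>z k. concave_on {0..} (fCP D z k) \<and> mono_on {0..} (fCP D z k)
                       \<and> fCP D z k 0 = 0"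
  shows "P_value D = PMI_value D"
proof (rule antisym)
  show "P_value D \<le> PMI_value D"
    using uREC_pos uCP_pos wf fREC fCP by (intro P_value_le_PMI_value) auto
  show "PMI_value D \<le> P_value D"
    using wf gamma fREC fCP by (intro PMI_value_le_P_value) auto
qed

end
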